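(* (1) In every model of $\mathsf{Md}_\bot$ satisfying $\mathsf{NVL}$: for all $x,y$, if $x\cdot y=\bot$ and $x\neq\bot$ then $y=\bot$. (2) In every model of $\mathsf{Md}_\bot$ satisfying $\mathsf{NVL}$: for all $x$, if $x^{-1}\neq\bot$ then $0\cdot x=0$. (3) Every model of $\mathsf{Md}_\bot$ satisfying $\mathsf{NVL}$ and $\mathsf{AVL}$ satisfies $\mathsf{CIL}$. (4) Every model of $\mathsf{Md}_\bot$ satisfying $\mathsf{CIL}$ satisfies $\mathsf{NVL}$. (5) Every model of $\mathsf{Md}_\bot$ satisfying $\mathsf{CIL}$ satisfies $\mathsf{AVL}$.
   Context: The signature has one sort, constants $0,1,\bot$, binary operations $+,\cdot$ and unary operations $-$ and $(\,\cdot\,)^{-1}$. $\mathsf{Md}_\bot$ is the set of equations (variables universally quantified): $(x+y)+z=x+(y+z)$; $x+y=y+x$; $x+0=x$; $x+(-x)=0\cdot x$; $(x\cdot y)\cdot z=x\cdot(y\cdot z)$; $x\cdot y=y\cdot x$; $1\cdot x=x$; $x\cdot(y+z)=x\cdot y+x\cdot z$; $-(-x)=x$; $0\cdot(x\cdot x)=0\cdot x$; $(x^{-1})^{-1}=x+0\cdot x^{-1}$; $x\cdot x^{-1}=1+0\cdot x^{-1}$; $(x\cdot y)^{-1}=x^{-1}\cdot y^{-1}$; $1^{-1}=1$; $0^{-1}=\bot$; $x+\bot=\bot$; $x\cdot\bot=\bot$. Normal Value Law $\mathsf{NVL}$: $\forall x\,(x\neq\bot\rightarrow 0\cdot x=0)$.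 Additional Value Law $\mathsf{AVL}$: $\forall x\,(x^{-1}=\bot\rightarrow 0\cdot x=x)$. Common Inverse Law $\mathsf{CIL}$: $\forall x\,(x\neq 0\wedge x\neq\bot\rightarrow x\cdot x^{-1}=1)$. *)

theory Defs
  imports Main
begin

text \<open>A structure of the signature (0, 1, bot, +, *, -, inverse) on a carrier type 'a
  is given by its operations. The model's domain is the whole type 'a.\<close>

definition Md_bot ::
  "'a \<Rightarrow> 'a \<Rightarrow> 'a \<Rightarrow> ('a \<Rightarrow> 'a \<Rightarrow> 'a) \<Rightarrow> ('a \<Rightarrow> 'a \<Rightarrow> 'a) \<Rightarrow> ('a \<Rightarrow> 'a) \<Rightarrow> ('a \<Rightarrow> 'a) \<Rightarrow> bool"
  where "Md_bot z e b ad mu ng iv \<longleftrightarrow>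
    (\<forall>x y w. ad (ad x y) w = ad x (ad y w)) \<and>
    (\<forall>x y. ad x y = ad y x) \<and>
    (\<forall>x. ad x z = x) \<and>
    (\<forall>x. ad x (ng x) = mu z x) \<and>
    (\<forall>x y w. mu (mu x y) w = mu x (mu y w)) \<and>
    (\<forall>x y. mu x y = mu y x) \<and>
    (\<forall>x. mu e x = x) \<and>
    (\<forall>x y w. mu x (ad y w) = ad (mu x y) (mu x w)) \<and>
    (\<forall>x. ng (ng x) = x) \<and>
    (\<forall>x. mu z (mu x x) = mu z x) \<and>
    (\<forall>x. iv (iv x) = ad x (mu z (iv x))) \<and>
    (\<forall>x. mu x (iv x) = ad e (mu z (iv x))) \<and>
    (\<forall>x y. iv (mu x y) = mu (iv x) (iv y)) \<and>
    iv e = e \<and>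
    iv z = b \<and>
    (\<forall>x. ad x b = b) \<and>
    (\<forall>x. mu x b = b)"

definition NVL :: "'a \<Rightarrow> 'a \<Rightarrow> ('a \<Rightarrow> 'a \<Rightarrow> 'a) \<Rightarrow> bool"
  where "NVL z b mu \<longleftrightarrow> (\<forall>x. x \<noteq> b \<longrightarrow> mu z x = z)"

definition AVL :: "'a \<Rightarrow> 'a \<Rightarrow> ('a \<Rightarrow> 'a \<Rightarrow> 'a) \<Rightarrow> ('a \<Rightarrow> 'a) \<Rightarrow> bool"
  where "AVL z b mu iv \<longleftrightarrow> (\<forall>x. iv x = b \<longrightarrow> mu z x = x)"

definition CIL :: "'a \<Rightarrow> 'a \<Rightarrow> 'a \<Rightarrow> ('a \<Rightarrow> 'a \<Rightarrow> 'a) \<Rightarrow> ('a \<Rightarrow> 'a) \<Rightarrow> bool"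
  where "CIL z e b mu iv \<longleftrightarrow> (\<forall>x. x \<noteq> z \<and> x \<noteq> b \<longrightarrow> mu x (iv x) = e)"

end

theory Submission
  imports Defs
begin

text \<open>For NVL-models the key fact is that \<open>0 \<cdot> x = 0\<close> for every \<open>x \<noteq> \<bottom>\<close>, while \<open>0 = \<bottom>\<close>
  (and likewise \<open>1 = \<bottom>\<close>) would collapse the model to \<open>\<bottom>\<close>. Under CIL one computes
  \<open>0 \<cdot> x = 0 \<cdot> x \<cdot> (x \<cdot> x\<^sup>-\<^sup>1) = 0 \<cdot> x\<^sup>2 \<cdot> x\<^sup>-\<^sup>1 = 0 \<cdot> x \<cdot> x\<^sup>-\<^sup>1 = 0\<close>; conversely, given NVL and AVL,
  an element \<open>x \<noteq> 0, \<bottom>\<close> has \<open>x\<^sup>-\<^sup>1 \<noteq> \<bottom>\<close>, so the axiom \<open>x \<cdot> x\<^sup>-\<^sup>1 = 1 + 0 \<cdot> x\<^sup>-\<^sup>1\<close> gives \<open>x \<cdot> x\<^sup>-\<^sup>1 = 1\<close>. Under CIL, \<open>x\<^sup>-\<^sup>1 = \<bottom>\<close> for such \<open>x\<close> would force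
  \<open>1 = x \<cdot> \<bottom> = \<bottom>\<close>, which gives AVL.\<close>

locale md_bot =
  fixes z e b :: 'a and ad mu :: "'a \<Rightarrow> 'a \<Rightarrow> 'a" and ng iv :: "'a \<Rightarrow> 'a"
  assumes add_assoc: "ad (ad x y) w = ad x (ad y w)"
    and add_commute: "ad x y = ad y x"
    and add_zero: "ad x z = x"
    and add_neg: "ad x (ng x) = mu z x"
    and mul_assoc: "mu (mu x y) w = mu x (mu y w)"
    and mul_commute: "mu x y = mu y x"
    and one_mul: "mu e x = x"
    and distrib: "mu x (ad y w) = ad (mu x y) (mu x w)"
    and neg_neg: "ng (ng x) = x"
    and zero_mul_square: "mu z (mu x x) = mu z x"
    and inv_inv: "iv (iv x) = ad x (mu z (iv x))"
    and mul_inv: "mu x (iv x) = ad e (mu z (iv x))"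
    and inv_mul: "iv (mu x y) = mu (iv x) (iv y)"
    and inv_one: "iv e = e"
    and inv_zero: "iv z = b"
    and add_bot: "ad x b = b"
    and mul_bot: "mu x b = b"

lemma md_bot_if_Md_bot: "Md_bot z e b ad mu ng iv \<Longrightarrow> md_bot z e b ad mu ng iv"
  unfolding Md_bot_def md_bot_def by (elim conjE) (intro conjI; assumption)

context md_bot
begin

lemma mul_one: "mu x e = x"
  using one_mul mul_commute by metis

lemma zero_mul_zero: "mu z z = z"
proof -
  have "ad e (ng e) = z"
    using add_neg[of e] mul_one by simp
  moreover have "mu z (ng e) = z"
    using add_neg[of "ng e"] neg_neg[of e] add_commute[of e "ng e"] \<open>ad e (ng e) = z\<close> by simp
  ultimately have "mu z z = ad (mu z e) (mu z (ng e))"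
    using distrib by metis
  then show ?thesis
    using mul_one add_zero \<open>mu z (ng e) = z\<close> by simp
qed

lemma inv_bot: "iv b = b"
  using inv_inv[of z] inv_zero mul_bot add_bot by simp

lemma zero_eq_bot_imp_bot: "z = b \<Longrightarrow> x = b"
  using add_zero[of x] add_bot[of x] by simp

lemma one_eq_bot_imp_bot: "e = b \<Longrightarrow> x = b"
  using one_mul[of x] mul_bot[of x] mul_commute[of b x] by simp

lemma nvl_mul_eq_bot:
  assumes nvl: "NVL z b mu" and "mu x y = b" and "x \<noteq> b"
  shows "y = b"
proof (rule ccontr)
  assume "y \<noteq> b"
  with nvl \<open>x \<noteq> b\<close> have "mu z x = z" "mu z y = z"
    unfolding NVL_def by auto
  then have "mu z (mu x y) = z"
    using mul_assoc[of z x y] by simp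
  then have "z = b"
    using \<open>mu x y = b\<close> mul_bot by simp
  with \<open>x \<noteq> b\<close> show False
    using zero_eq_bot_imp_bot by blast
qed

lemma nvl_zero_mul_of_inv_ne_bot:
  assumes "NVL z b mu" and "iv x \<noteq> b"
  shows "mu z x = z"
  using assms inv_bot unfolding NVL_def by auto

lemma nvl_avl_imp_cil:
  assumes nvl: "NVL z b mu" and avl: "AVL z b mu iv"
  shows "CIL z e b mu iv"
  unfolding CIL_def
proof (intro allI impI)
  fix x
  assume x: "x \<noteq> z \<and> x \<noteq> b"
  then have "mu z x = z"
    using nvl unfolding NVL_def by auto
  with x avl have "iv x \<noteq> b"
    unfolding AVL_def by auto
  then have "mu z (iv x) = z"
    using nvl unfolding NVL_def by auto
  then show "mu x (iv x) = e"
    using mul_inv[of x] add_zero[of e] by simp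
qed

lemma cil_imp_nvl:
  assumes cil: "CIL z e b mu iv"
  shows "NVL z b mu"
  unfolding NVL_def
proof (intro allI impI)
  fix x
  assume "x \<noteq> b"
  show "mu z x = z"
  proof (cases "x = z")
    case True
    then show ?thesis using zero_mul_zero by simp
  next
    case False
    with cil \<open>x \<noteq> b\<close> have xi: "mu x (iv x) = e"
      unfolding CIL_def by auto
    have "mu z x = mu (mu z x) (mu x (iv x))"
      using xi mul_one by simp
    also have "\<dots> = mu (mu z (mu x x)) (iv x)"
      by (simp only: mul_assoc)
    also have "\<dots> = mu z (mu x (iv x))"
      by (simp only: zero_mul_square mul_assoc)
    also have "\<dots> = z"
      using xi mul_one by simp
    finally show ?thesis .
  qed
qed

lemma cil_imp_avl:
  assumes cil: "CIL z e b mu iv"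
  shows "AVL z b mu iv"
  unfolding AVL_def
proof (intro allI impI)
  fix x
  assume "iv x = b"
  show "mu z x = x"
  proof (cases "x = z \<or> x = b")
    case True
    then show ?thesis
      using zero_mul_zero mul_bot[of z] by (elim disjE) simp_all
  next
    case False
    with cil have "mu x (iv x) = e"
      unfolding CIL_def by auto
    then have "e = b"
      using \<open>iv x = b\<close> mul_bot[of x] by (simp only:)
    then have "x = b"
      by (rule one_eq_bot_imp_bot)
    then show ?thesis
      using mul_bot[of z] by (simp only:)
  qed
qed

end

theorem proposition2p6:
  shows "(\<forall>(z::'a) e b ad mu ng iv. Md_bot z e b ad mu ng iv \<and> NVL z b mu \<longrightarrow>
            (\<forall>x y. mu x y = b \<and> x \<noteq> b \<longrightarrow> y = b))
    \<and> (\<forall>(z::'a) e b ad mu ng iv. Md_bot z e b ad mu ng iv \<and> NVL z b mu \<longrightarrow>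
            (\<forall>x. iv x \<noteq> b \<longrightarrow> mu z x = z))
    \<and> (\<forall>(z::'a) e b ad mu ng iv. Md_bot z e b ad mu ng iv \<and> NVL z b mu \<and> AVL z b mu iv \<longrightarrow>
            CIL z e b mu iv)
    \<and> (\<forall>(z::'a) e b ad mu ng iv. Md_bot z e b ad mu ng iv \<and> CIL z e b mu iv \<longrightarrow>
            NVL z b mu)
    \<and> (\<forall>(z::'a) e b ad mu ng iv. Md_bot z e b ad mu ng iv \<and> CIL z e b mu iv \<longrightarrow>
            AVL z b mu iv)"
proof (intro conjI allI impI; elim conjE)
  fix z e b :: 'a and ad mu ng iv
  assume "Md_bot z e b ad mu ng iv"
  then have md: "md_bot z e b ad mu ng iv"
    by (rule md_bot_if_Md_bot)
  show "y = b" if "NVL z b mu" "mu x y = b" "x \<noteq> b" for x y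
    using md_bot.nvl_mul_eq_bot[OF md that] .
  show "mu z x = z" if "NVL z b mu" "iv x \<noteq> b" for x
    using md_bot.nvl_zero_mul_of_inv_ne_bot[OF md that] .
  show "CIL z e b mu iv" if "NVL z b mu" "AVL z b mu iv"
    using md_bot.nvl_avl_imp_cil[OF md that] .
  show "NVL z b mu" if "CIL z e b mu iv"
    using md_bot.cil_imp_nvl[OF md that] .
  show "AVL z b mu iv" if "CIL z e b mu iv"
    using md_bot.cil_imp_avl[OF md that] .
qed

end
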